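(* Let $(X,\tau)$ be a $\mathbb{B}$-topological space and $\gamma$ a closed set of $(X,\tau)$. Then $\gamma$ is irreducible if and only if $\gamma[tt]$ is an irreducible closed subset of the topological space $(X,\tau[tt])$ and $\gamma[ff]$ is an irreducible closed subset of the topological space $(X,\tau[ff])$.
   Context: $\mathbb{B}=\{0,1,tt,ff\}$ is the four-element Boolean algebra with bottom $0$, top $1$, and $tt,ff$ incomparable and complements of each other; $\neg$ is its complement and $a\to b=\neg a\vee b$. $\mathbb{B}^X$ is the set of maps $X\to\mathbb{B}$ with pointwise order and operations; $b_X$ is the constant map with value $b$; $\lambda[b]=\{x\in X:\lambda(x)\ge b\}$. A $\mathbb{B}$-topology on $X$ is a subset $\tau\subseteq\mathbb{B}^X$ containing all constant maps and closed under arbitrary pointwise joins and finite pointwise meets; $\tau[tt]=\{\lambda[tt]:\lambda\in\tau\}$ and $\tau[ff]=\{\lambda[ff]:\lambda\in\tau\}$ are topologies. $\gamma\in\mathbb{B}^X$ is closed if $\neg\gamma\in\tau$. $\mathrm{sub}_X(\lambda,\mu)=\bigwedge_{x\in X}(\lambda(x)\to\mu(x))$. A closed set $\gamma$ is irreducible if (i) $\mathrm{sub}_X(\gamma,b_X)=b$ for all $b\in\mathbb{B}$, and (ii) $\mathrm{sub}_X(\gamma,\mu_1\vee\mu_2)=\mathrm{sub}_X(\gamma,\mu_1)\vee\mathrm{sub}_X(\gamma,\mu_2)$ for all closed sets $\mu_1,\mu_2$. An irreducible closed subset of a topological space is a nonempty closed set not contained in the union of two closed sets unless it is contained in one of them.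 *)

theory Defs
  imports "HOL-Analysis.Analysis" "HOL-Library.Product_Order"
begin

text \<open>The four-element Boolean algebra B = {0,1,tt,ff}, realised as bool \<times> bool with
  componentwise order: 0 = bot = (False,False), 1 = top = (True,True),
  tt = (True,False), ff = (False,True).\<close>

type_synonym B4 = "bool \<times> bool"

definition tt :: B4 where "tt = (True, False)"
definition ff :: B4 where "ff = (False, True)"

definition bimp :: "B4 \<Rightarrow> B4 \<Rightarrow> B4" where "bimp a b = sup (- a) b"

text \<open>Maps X \<rightarrow> B are represented as functions 'a \<Rightarrow> B4 that are bot (= 0) outside X.\<close>

definition Bmaps :: "'a set \<Rightarrow> ('a \<Rightarrow> B4) set" where
  "Bmaps X = {f. \<forall>x. x \<notin> X \<longrightarrow> f x = bot}"

definition constB :: "'a set \<Rightarrow> B4 \<Rightarrow> ('a \<Rightarrow> B4)" where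
  "constB X b = (\<lambda>x. if x \<in> X then b else bot)"

definition negB :: "'a set \<Rightarrow> ('a \<Rightarrow> B4) \<Rightarrow> ('a \<Rightarrow> B4)" where
  "negB X f = (\<lambda>x. if x \<in> X then - f x else bot)"

definition joinB :: "'a set \<Rightarrow> ('a \<Rightarrow> B4) set \<Rightarrow> ('a \<Rightarrow> B4)" where
  "joinB X F = (\<lambda>x. if x \<in> X then (SUP f\<in>F. f x) else bot)"

definition meetB :: "'a set \<Rightarrow> ('a \<Rightarrow> B4) \<Rightarrow> ('a \<Rightarrow> B4) \<Rightarrow> ('a \<Rightarrow> B4)" where
  "meetB X f g = (\<lambda>x. if x \<in> X then inf (f x) (g x) else bot)"

definition cut :: "'a set \<Rightarrow> ('a \<Rightarrow> B4) \<Rightarrow> B4 \<Rightarrow> 'a set" where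
  "cut X f b = {x \<in> X. b \<le> f x}"

definition is_Btopology :: "'a set \<Rightarrow> ('a \<Rightarrow> B4) set \<Rightarrow> bool" where
  "is_Btopology X \<tau> \<longleftrightarrow> \<tau> \<subseteq> Bmaps X
     \<and> (\<forall>b. constB X b \<in> \<tau>)
     \<and> (\<forall>F. F \<subseteq> \<tau> \<longrightarrow> joinB X F \<in> \<tau>)
     \<and> (\<forall>f\<in>\<tau>. \<forall>g\<in>\<tau>. meetB X f g \<in> \<tau>)"

definition Bclosed :: "'a set \<Rightarrow> ('a \<Rightarrow> B4) set \<Rightarrow> ('a \<Rightarrow> B4) \<Rightarrow> bool" where
  "Bclosed X \<tau> g \<longleftrightarrow> g \<in> Bmaps X \<and> negB X g \<in> \<tau>"

definition subB :: "'a set \<Rightarrow> ('a \<Rightarrow> B4) \<Rightarrow> ('a \<Rightarrow> B4) \<Rightarrow> B4" where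
  "subB X f g = (INF x\<in>X. bimp (f x) (g x))"

definition Birreducible :: "'a set \<Rightarrow> ('a \<Rightarrow> B4) set \<Rightarrow> ('a \<Rightarrow> B4) \<Rightarrow> bool" where
  "Birreducible X \<tau> g \<longleftrightarrow> Bclosed X \<tau> g
     \<and> (\<forall>b. subB X g (constB X b) = b)
     \<and> (\<forall>m1 m2. Bclosed X \<tau> m1 \<longrightarrow> Bclosed X \<tau> m2 \<longrightarrow>
           subB X g (sup m1 m2) = sup (subB X g m1) (subB X g m2))"

definition level_top :: "'a set \<Rightarrow> ('a \<Rightarrow> B4) set \<Rightarrow> B4 \<Rightarrow> 'a topology" where
  "level_top X \<tau> b = topology (\<lambda>U. \<exists>f\<in>\<tau>. U = cut X f b)"

definition irreducible_closed :: "'a topology \<Rightarrow> 'a set \<Rightarrow> bool" where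
  "irreducible_closed T S \<longleftrightarrow> closedin T S \<and> S \<noteq> {}
     \<and> (\<forall>A B. closedin T A \<longrightarrow> closedin T B \<longrightarrow> S \<subseteq> A \<union> B \<longrightarrow> S \<subseteq> A \<or> S \<subseteq> B)"

end

theory Submission
  imports Defs
begin

text \<open>Everything about the four-element algebra reduces to its two atoms tt and ff: an
  element is determined by the atoms below it, and cutting at an atom turns joins, complements
  and the inclusion degree subB into unions, relative complements and set inclusion.  So the
  cuts of B-closed sets at an atom are exactly the closed sets of the level topology, the
  constant condition of B-irreducibility becomes non-emptiness of both cuts, and the join
  condition becomes primeness of both cuts for unions of closed sets.\<close>

definition B4_atom :: "B4 \<Rightarrow> bool" where "B4_atom b \<longleftrightarrow> b = tt \<or> b = ff"

lemma B4_atom_tt: "B4_atom tt" and B4_atom_ff: "B4_atom ff"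
  by (simp_all add: B4_atom_def)

lemma B4_atomE: "B4_atom b \<Longrightarrow> (b = tt \<Longrightarrow> P) \<Longrightarrow> (b = ff \<Longrightarrow> P) \<Longrightarrow> P"
  unfolding B4_atom_def by blast

lemma B4_atom_le_Sup_iff: "B4_atom b \<Longrightarrow> b \<le> Sup (A :: B4 set) \<longleftrightarrow> (\<exists>a\<in>A. b \<le> a)"
  by (erule B4_atomE) (auto simp: tt_def ff_def less_eq_prod_def fst_Sup snd_Sup)

lemma B4_atom_le_sup_iff: "B4_atom b \<Longrightarrow> b \<le> sup (a :: B4) c \<longleftrightarrow> b \<le> a \<or> b \<le> c"
  by (erule B4_atomE) (auto simp: tt_def ff_def less_eq_prod_def)

lemma B4_atom_le_uminus_iff: "B4_atom b \<Longrightarrow> b \<le> - (a :: B4) \<longleftrightarrow> \<not> b \<le> a"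
  by (erule B4_atomE) (auto simp: tt_def ff_def less_eq_prod_def uminus_prod_def)

lemma B4_atom_not_le_bot: "B4_atom b \<Longrightarrow> \<not> b \<le> (bot :: B4)"
  by (erule B4_atomE) (auto simp: tt_def ff_def less_eq_prod_def)

lemma B4_eq_iff_atoms: "(a :: B4) = c \<longleftrightarrow> (tt \<le> a \<longleftrightarrow> tt \<le> c) \<and> (ff \<le> a \<longleftrightarrow> ff \<le> c)"
  by (cases a; cases c) (auto simp: tt_def ff_def)

lemma cut_subset: "cut X f b \<subseteq> X"
  by (auto simp: cut_def)

lemma cut_sup: "B4_atom b \<Longrightarrow> cut X (sup f g) b = cut X f b \<union> cut X g b"
  by (auto simp: cut_def B4_atom_le_sup_iff)

lemma cut_negB: "B4_atom b \<Longrightarrow> cut X (negB X f) b = X - cut X f b"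
  by (auto simp: cut_def negB_def B4_atom_le_uminus_iff)

lemma B4_atom_le_subB_iff: "B4_atom b \<Longrightarrow> b \<le> subB X g h \<longleftrightarrow> cut X g b \<subseteq> cut X h b"
  by (auto simp: subB_def bimp_def cut_def le_INF_iff B4_atom_le_sup_iff B4_atom_le_uminus_iff)

lemma negB_negB: "f \<in> Bmaps X \<Longrightarrow> negB X (negB X f) = f"
  by (auto simp: negB_def Bmaps_def)

lemma is_BtopologyD:
  assumes "is_Btopology X \<tau>"
  shows "\<tau> \<subseteq> Bmaps X" and "constB X b \<in> \<tau>" and "F \<subseteq> \<tau> \<Longrightarrow> joinB X F \<in> \<tau>"
    and "f \<in> \<tau> \<Longrightarrow> g \<in> \<tau> \<Longrightarrow> meetB X f g \<in> \<tau>"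
  using assms unfolding is_Btopology_def by blast+

lemma istopology_level:
  assumes \<tau>: "is_Btopology X \<tau>" and b: "B4_atom b"
  shows "istopology (\<lambda>U. \<exists>f\<in>\<tau>. U = cut X f b)"
  unfolding istopology_def
proof (intro conjI allI impI)
  fix S T assume "\<exists>f\<in>\<tau>. S = cut X f b" "\<exists>g\<in>\<tau>. T = cut X g b"
  then obtain f g where fg: "f \<in> \<tau>" "g \<in> \<tau>" "S = cut X f b" "T = cut X g b"
    by blast
  then have "S \<inter> T = cut X (meetB X f g) b"
    by (auto simp: cut_def meetB_def)
  then show "\<exists>h\<in>\<tau>. S \<inter> T = cut X h b"
    using is_BtopologyD(4)[OF \<tau> fg(1,2)] by blast
next
  fix K assume K: "\<forall>S\<in>K. \<exists>f\<in>\<tau>. S = cut X f b"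
  define F where "F = {f \<in> \<tau>. cut X f b \<in> K}"
  have "joinB X F \<in> \<tau>"
    by (rule is_BtopologyD(3)[OF \<tau>]) (auto simp: F_def)
  moreover have "\<Union>K = cut X (joinB X F) b"
  proof -
    have "\<Union>K = (\<Union>f\<in>F. cut X f b)"
      using K by (auto simp: F_def)
    also have "\<dots> = cut X (joinB X F) b"
      by (auto simp: cut_def joinB_def B4_atom_le_Sup_iff[OF b])
    finally show ?thesis .
  qed
  ultimately show "\<exists>f\<in>\<tau>. \<Union>K = cut X f b"
    by blast
qed

lemma openin_level_top:
  "is_Btopology X \<tau> \<Longrightarrow> B4_atom b \<Longrightarrow> openin (level_top X \<tau> b) U \<longleftrightarrow> (\<exists>f\<in>\<tau>. U = cut X f b)"
  using istopology_level unfolding level_top_def by fastforce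

lemma topspace_level_top:
  assumes \<tau>: "is_Btopology X \<tau>" and b: "B4_atom b"
  shows "topspace (level_top X \<tau> b) = X"
proof -
  have "X = cut X (constB X top) b"
    by (auto simp: cut_def constB_def)
  then have "openin (level_top X \<tau> b) X"
    unfolding openin_level_top[OF \<tau> b] using is_BtopologyD(2)[OF \<tau>, of top] by (rule bexI)
  moreover have "topspace (level_top X \<tau> b) \<subseteq> X"
    unfolding topspace_def openin_level_top[OF \<tau> b] by (auto simp: cut_def)
  ultimately show ?thesis
    using openin_subset by (metis subset_antisym)
qed

lemma closedin_level_top_iff:
  assumes \<tau>: "is_Btopology X \<tau>" and b: "B4_atom b"
  shows "closedin (level_top X \<tau> b) A \<longleftrightarrow> (\<exists>m. Bclosed X \<tau> m \<and> A = cut X m b)"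
proof
  assume "closedin (level_top X \<tau> b) A"
  then have "A \<subseteq> X" and "openin (level_top X \<tau> b) (X - A)"
    unfolding closedin_def topspace_level_top[OF \<tau> b] by simp_all
  then obtain f where f: "f \<in> \<tau>" "X - A = cut X f b"
    unfolding openin_level_top[OF \<tau> b] by blast
  have "A = cut X (negB X f) b"
    using \<open>A \<subseteq> X\<close> f(2) by (simp add: cut_negB[OF b] flip: f(2)) blast
  moreover have "Bclosed X \<tau> (negB X f)"
    using f(1) is_BtopologyD(1)[OF \<tau>]
    by (simp add: Bclosed_def negB_negB subset_iff) (simp add: Bmaps_def negB_def)
  ultimately show "\<exists>m. Bclosed X \<tau> m \<and> A = cut X m b"
    by blast
next
  assume "\<exists>m. Bclosed X \<tau> m \<and> A = cut X m b"
  then obtain m where m: "negB X m \<in> \<tau>" "A = cut X m b"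
    by (auto simp: Bclosed_def)
  then have "A \<subseteq> X" and "X - A = cut X (negB X m) b"
    by (simp_all add: cut_subset cut_negB[OF b])
  then show "closedin (level_top X \<tau> b) A"
    unfolding closedin_def topspace_level_top[OF \<tau> b] openin_level_top[OF \<tau> b]
    using m(1) by blast
qed

lemma irreducible_closed_level_top_iff:
  assumes \<tau>: "is_Btopology X \<tau>" and b: "B4_atom b" and \<gamma>: "Bclosed X \<tau> \<gamma>"
  shows "irreducible_closed (level_top X \<tau> b) (cut X \<gamma> b) \<longleftrightarrow> cut X \<gamma> b \<noteq> {} \<and>
    (\<forall>m1 m2. Bclosed X \<tau> m1 \<longrightarrow> Bclosed X \<tau> m2 \<longrightarrow> cut X \<gamma> b \<subseteq> cut X m1 b \<union> cut X m2 b \<longrightarrow>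
       cut X \<gamma> b \<subseteq> cut X m1 b \<or> cut X \<gamma> b \<subseteq> cut X m2 b)"
  using \<gamma> unfolding irreducible_closed_def closedin_level_top_iff[OF \<tau> b] by blast

lemma subB_constB_iff_cuts_nonempty:
  "(\<forall>a. subB X \<gamma> (constB X a) = a) \<longleftrightarrow> cut X \<gamma> tt \<noteq> {} \<and> cut X \<gamma> ff \<noteq> {}"
proof -
  have le_iff: "b \<le> subB X \<gamma> (constB X a) \<longleftrightarrow> cut X \<gamma> b = {} \<or> b \<le> a" if "B4_atom b" for a b
    unfolding B4_atom_le_subB_iff[OF that] by (auto simp: cut_def constB_def)
  show ?thesis
    unfolding B4_eq_iff_atoms[of "subB X \<gamma> _"] le_iff[OF B4_atom_tt] le_iff[OF B4_atom_ff]
    using B4_atom_not_le_bot[OF B4_atom_tt] B4_atom_not_le_bot[OF B4_atom_ff] by blast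
qed

lemma subB_sup_iff_cuts_prime:
  "subB X \<gamma> (sup m1 m2) = sup (subB X \<gamma> m1) (subB X \<gamma> m2) \<longleftrightarrow>
    (\<forall>b\<in>{tt, ff}. cut X \<gamma> b \<subseteq> cut X m1 b \<union> cut X m2 b \<longrightarrow>
       cut X \<gamma> b \<subseteq> cut X m1 b \<or> cut X \<gamma> b \<subseteq> cut X m2 b)"
proof -
  have "b \<le> subB X \<gamma> (sup m1 m2) \<longleftrightarrow> cut X \<gamma> b \<subseteq> cut X m1 b \<union> cut X m2 b"
    and "b \<le> sup (subB X \<gamma> m1) (subB X \<gamma> m2) \<longleftrightarrow> cut X \<gamma> b \<subseteq> cut X m1 b \<or> cut X \<gamma> b \<subseteq> cut X m2 b"
    if "B4_atom b" for b
    by (simp_all add: that B4_atom_le_subB_iff cut_sup B4_atom_le_sup_iff)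
  note le_iffs = this[OF B4_atom_tt] this[OF B4_atom_ff]
  show ?thesis
    unfolding B4_eq_iff_atoms[of "subB X \<gamma> _"] le_iffs by auto
qed

theorem mainTheorem6:
  fixes X :: "'a set" and \<tau> :: "('a \<Rightarrow> B4) set" and \<gamma> :: "'a \<Rightarrow> B4"
  assumes "is_Btopology X \<tau>"
    and "Bclosed X \<tau> \<gamma>"
  shows "Birreducible X \<tau> \<gamma> \<longleftrightarrow>
           irreducible_closed (level_top X \<tau> tt) (cut X \<gamma> tt)
         \<and> irreducible_closed (level_top X \<tau> ff) (cut X \<gamma> ff)"
  unfolding Birreducible_def subB_constB_iff_cuts_nonempty subB_sup_iff_cuts_prime
    irreducible_closed_level_top_iff[OF assms(1) B4_atom_tt assms(2)]
    irreducible_closed_level_top_iff[OF assms(1) B4_atom_ff assms(2)]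
  using assms(2) by (simp add: all_conj_distrib imp_conjR conj_ac)

end
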